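(* Let $f\in\mathbb F_q[t;\theta]$ have degree $\ge1$. Then $f$ is irreducible in $\mathbb F_q[t;\theta]$ if and only if $f^{[]}(x)$ has no divisor $u(x)\in\mathbb F_q[x^{[]}]$ (divisibility in $\mathbb F_q[x]$) with $0<\deg u<\deg f^{[]}$.
   Context: $p$ is a prime, $q=p^n$, $\theta$ is the Frobenius map $g\mapsto g^p$ on $\mathbb F_q$ and on $\mathbb F_q[x]$. $\mathbb F_q[t;\theta]$ is the skew polynomial ring with $ta=\theta(a)t$; it is contained in $S=\mathbb F_q[x][t;\theta]$ (where $tg=g^pt$). For $u\in S$ and $h\in\mathbb F_q[x]$, $u(h)$ is the unique element of $\mathbb F_q[x]$ with $u-u(h)\in S(t-h)$. For $f\in\mathbb F_q[t;\theta]$, $f^{[]}(x):=f(x)\in\mathbb F_q[x]$; explicitly, if $f=\sum a_it^i$ then $f^{[]}(x)=\sum a_ix^{[i]}$ where $[i]=\frac{p^i-1}{p-1}$ for $i\ge1$, $[0]=0$. $\mathbb F_q[x^{[]}]=\{\sum\alpha_ix^{[i]}\mid\alpha_i\in\mathbb F_q\}$. Irreducible means: not a unit and not a product of two non-units. *)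

theory Defs
  imports "HOL-Computational_Algebra.Polynomial"
begin

text \<open>Skew polynomials in F_q[t;theta] are represented by their (left) coefficient
  polynomials sum a_i t^i, stored as elements of 'a poly; only the multiplication differs.
  The base field is a finite field 'a; p = CHAR('a), theta(a) = a^p.\<close>

definition frob_pow :: "nat \<Rightarrow> 'a::{finite,field} \<Rightarrow> 'a" where
  "frob_pow i c = c ^ (CHAR('a) ^ i)"

definition skew_mult :: "'a::{finite,field} poly \<Rightarrow> 'a poly \<Rightarrow> 'a poly" where
  "skew_mult f g = (\<Sum>i\<le>degree f. smult (coeff f i) (monom 1 i * map_poly (frob_pow i) g))"

definition skew_unit :: "'a::{finite,field} poly \<Rightarrow> bool" where
  "skew_unit f \<longleftrightarrow> (\<exists>g. skew_mult f g = 1 \<and> skew_mult g f = 1)"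

definition skew_irreducible :: "'a::{finite,field} poly \<Rightarrow> bool" where
  "skew_irreducible f \<longleftrightarrow> \<not> skew_unit f \<and>
     (\<forall>a b. f = skew_mult a b \<longrightarrow> skew_unit a \<or> skew_unit b)"

definition bracket :: "'a::{finite,field} itself \<Rightarrow> nat \<Rightarrow> nat" where
  "bracket _ i = (CHAR('a) ^ i - 1) div (CHAR('a) - 1)"

definition fbr :: "'a::{finite,field} poly \<Rightarrow> 'a poly" where
  "fbr f = (\<Sum>i\<le>degree f. monom (coeff f i) (bracket TYPE('a) i))"

definition Fq_xbr :: "'a::{finite,field} poly set" where
  "Fq_xbr = {u. \<forall>k. coeff u k \<noteq> 0 \<longrightarrow> (\<exists>i. k = bracket TYPE('a) i)}"

end

theory Submission
  imports Defs
begin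

(*
  Let p = CHAR('a) and write [i] = (p^i - 1)/(p - 1) = 1 + p + ... + p^(i-1).  The linearization
  f = sum a_i t^i  |->  f^[] = sum a_i x^[i]  is an additive bijection from skew polynomials onto
  F_q[x^[]], with deg f^[] = [deg f].  Two facts make it a dictionary for right divisibility:

  (1) for every q and g, g^[] divides (q g)^[] in F_q[x], because
      (c t^i g)^[] = c x^[i] (g^[])^(p^i) by [i + j] = [i] + p^i [j] and the Frobenius
      ("freshman's dream") identity;
  (2) skew polynomials admit right division with remainder f = q g + r, deg r < deg g,
      and deg (a b) = deg a + deg b.

  Hence for deg g >= 1:  g^[] divides f^[]  iff  g is a right factor of f  (the remainder r has
  r^[] divisible by g^[] of larger degree, so r = 0).  Since the units of F_q[t;theta] are the
  nonzero constants, f is irreducible iff it has no factorization into two factors of positive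
  degree, and such factorizations f = q g correspond to divisors g^[] of f^[] in F_q[x^[]] whose
  degree lies strictly between 0 and deg f^[].
*)

lemma prime_char: "prime CHAR('a::{finite,field})"
  by (rule prime_CHAR_semidom) (rule finite_imp_CHAR_pos, simp)

lemma char_ge_2: "CHAR('a::{finite,field}) \<ge> 2"
  using prime_char[where 'a='a] prime_ge_2_nat by blast

lemma bracket_eq_sum: "bracket TYPE('a::{finite,field}) n = (\<Sum>i<n. CHAR('a)^i)"
proof -
  have p: "CHAR('a) \<ge> 2" by (rule char_ge_2)
  have "int (CHAR('a)^n - 1) = int (CHAR('a) - 1) * int (\<Sum>i<n. CHAR('a)^i)"
    using p power_diff_1_eq[of "int CHAR('a)" n] by (simp add: of_nat_diff)
  then have "CHAR('a)^n - 1 = (CHAR('a) - 1) * (\<Sum>i<n. CHAR('a)^i)"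
    by (simp only: of_nat_mult[symmetric] of_nat_eq_iff)
  then show ?thesis using p unfolding bracket_def by simp
qed

lemma bracket_0 [simp]: "bracket TYPE('a::{finite,field}) 0 = 0"
  by (simp add: bracket_eq_sum)

lemma bracket_Suc: "bracket TYPE('a::{finite,field}) (Suc n) = bracket TYPE('a) n + CHAR('a)^n"
  by (simp add: bracket_eq_sum)

text \<open>The additivity law [i + j] = [i] + p^i [j]; it makes x^[i] (x^[j])^(p^i) = x^[i+j].\<close>
lemma bracket_add:
  "bracket TYPE('a::{finite,field}) (i + j) = bracket TYPE('a) i + CHAR('a)^i * bracket TYPE('a) j"
  by (induction j) (simp_all add: bracket_Suc power_add algebra_simps)

text \<open>Brackets are strictly increasing, so x^[i] determines i and degrees compare as exponents.\<close>
lemma bracket_strict_mono: "strict_mono (bracket TYPE('a::{finite,field}))"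
  using char_ge_2[where 'a='a] by (simp add: strict_mono_Suc_iff bracket_Suc)

lemma bracket_less_iff [simp]:
  "bracket TYPE('a::{finite,field}) i < bracket TYPE('a) j \<longleftrightarrow> i < j"
  using bracket_strict_mono[where 'a='a] strict_mono_less by blast

lemma bracket_eq_iff [simp]:
  "bracket TYPE('a::{finite,field}) i = bracket TYPE('a) j \<longleftrightarrow> i = j"
  using bracket_strict_mono[where 'a='a] strict_mono_eq by blast

lemma bracket_pos_iff [simp]: "0 < bracket TYPE('a::{finite,field}) i \<longleftrightarrow> 0 < i"
  using bracket_less_iff[where 'a='a, of 0 i] by simp

lemma bracket_ge: "i \<le> bracket TYPE('a::{finite,field}) i"
  using bracket_strict_mono[where 'a='a] strict_mono_imp_increasing by blast

lemma fbr_bound: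
  fixes f :: "'a::{finite,field} poly"
  assumes "degree f \<le> N"
  shows "fbr f = (\<Sum>i\<le>N. monom (coeff f i) (bracket TYPE('a) i))"
  unfolding fbr_def
  by (rule sum.mono_neutral_left) (use assms in \<open>auto simp: coeff_eq_0\<close>)

lemma coeff_fbr_bracket [simp]:
  fixes f :: "'a::{finite,field} poly"
  shows "coeff (fbr f) (bracket TYPE('a) j) = coeff f j"
proof -
  have "fbr f = (\<Sum>i\<le>max (degree f) j. monom (coeff f i) (bracket TYPE('a) i))"
    by (rule fbr_bound) simp
  then show ?thesis by (simp add: coeff_sum coeff_monom)
qed

lemma coeff_fbr_not_bracket:
  fixes f :: "'a::{finite,field} poly"
  assumes "\<forall>j. k \<noteq> bracket TYPE('a) j"
  shows "coeff (fbr f) k = 0"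
proof -
  have "bracket TYPE('a) i \<noteq> k" for i using assms by metis
  then show ?thesis by (simp add: fbr_def coeff_sum coeff_monom)
qed

lemma fbr_0 [simp]: "fbr (0::'a::{finite,field} poly) = 0"
  by (simp add: fbr_def)

lemma fbr_eq_0_iff [simp]: "fbr (f::'a::{finite,field} poly) = 0 \<longleftrightarrow> f = 0"
  by (metis coeff_fbr_bracket coeff_0 fbr_0 poly_eqI)

lemma degree_fbr [simp]:
  fixes f :: "'a::{finite,field} poly"
  shows "degree (fbr f) = bracket TYPE('a) (degree f)"
proof (cases "f = 0")
  case False
  have "degree (fbr f) \<le> bracket TYPE('a) (degree f)"
  proof (rule degree_le, intro allI impI)
    fix k assume k: "bracket TYPE('a) (degree f) < k"
    show "coeff (fbr f) k = 0"
    proof (cases "\<exists>j. k = bracket TYPE('a) j")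
      case True
      then obtain j where j: "k = bracket TYPE('a) j" by blast
      with k have "degree f < j" by simp
      then show ?thesis by (simp add: j coeff_eq_0)
    qed (simp add: coeff_fbr_not_bracket)
  qed
  moreover have "bracket TYPE('a) (degree f) \<le> degree (fbr f)"
    using False by (intro le_degree) simp
  ultimately show ?thesis by simp
qed simp

lemma fbr_in_Fq_xbr: "fbr (f::'a::{finite,field} poly) \<in> Fq_xbr"
  unfolding Fq_xbr_def using coeff_fbr_not_bracket by blast

lemma Fq_xbr_imp_fbr:
  fixes u :: "'a::{finite,field} poly"
  assumes "u \<in> Fq_xbr"
  obtains g where "fbr g = u"
proof
  define g where "g = (\<Sum>i\<le>degree u. monom (coeff u (bracket TYPE('a) i)) i)"
  have coeff_g: "coeff g i = coeff u (bracket TYPE('a) i)" for i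
  proof (cases "i \<le> degree u")
    case False
    then have "degree u < bracket TYPE('a) i" using bracket_ge[where 'a='a, of i] by simp
    with False show ?thesis by (simp add: g_def coeff_sum coeff_monom coeff_eq_0)
  qed (simp add: g_def coeff_sum coeff_monom)
  show "fbr g = u"
  proof (rule poly_eqI)
    fix k show "coeff (fbr g) k = coeff u k"
    proof (cases "\<exists>j. k = bracket TYPE('a) j")
      case False then show ?thesis using assms by (auto simp: coeff_fbr_not_bracket Fq_xbr_def)
    qed (auto simp: coeff_g)
  qed
qed

lemma fbr_add: "fbr (f + g :: 'a::{finite,field} poly) = fbr f + fbr g"
proof -
  let ?N = "max (degree f) (degree g)"
  have "fbr (f + g) = (\<Sum>i\<le>?N. monom (coeff (f + g) i) (bracket TYPE('a) i))"
    by (rule fbr_bound) (simp add: degree_add_le)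
  also have "\<dots> = (\<Sum>i\<le>?N. monom (coeff f i) (bracket TYPE('a) i))
                  + (\<Sum>i\<le>?N. monom (coeff g i) (bracket TYPE('a) i))"
    by (simp only: coeff_add add_monom[symmetric] sum.distrib)
  also have "\<dots> = fbr f + fbr g"
    by (simp add: fbr_bound[symmetric])
  finally show ?thesis .
qed

lemma fbr_sum: "fbr (sum F A :: 'a::{finite,field} poly) = (\<Sum>x\<in>A. fbr (F x))"
  by (induction A rule: infinite_finite_induct) (simp_all add: fbr_add)

lemma fbr_smult: "fbr (smult c f :: 'a::{finite,field} poly) = smult c (fbr f)"
proof -
  have "fbr (smult c f) = (\<Sum>i\<le>degree f. monom (coeff (smult c f) i) (bracket TYPE('a) i))"
    by (rule fbr_bound) simp
  also have "\<dots> = [:c:] * fbr f"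
    unfolding fbr_def sum_distrib_left by (simp add: smult_monom)
  finally show ?thesis by simp
qed

lemma fbr_monom: "fbr (monom c n :: 'a::{finite,field} poly) = monom c (bracket TYPE('a) n)"
proof -
  have "fbr (monom c n) = (\<Sum>i\<le>n. monom (coeff (monom c n) i) (bracket TYPE('a) i))"
    by (rule fbr_bound) (simp add: degree_monom_le)
  also have "\<dots> = (\<Sum>i\<le>n. if i = n then monom c (bracket TYPE('a) i) else 0)"
    by (rule sum.cong) (auto simp: coeff_monom)
  finally show ?thesis by simp
qed

lemma frob_pow_0 [simp]: "frob_pow i (0::'a::{finite,field}) = 0"
  using char_ge_2[where 'a='a] by (simp add: frob_pow_def)

lemma frob_pow_nonzero: "c \<noteq> 0 \<Longrightarrow> frob_pow i (c::'a::{finite,field}) \<noteq> 0"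
  by (simp add: frob_pow_def)

lemma degree_map_frob_pow [simp]:
  "degree (map_poly (frob_pow i) (g::'a::{finite,field} poly)) = degree g"
  by (rule degree_map_poly) (simp add: frob_pow_nonzero)

lemma skew_mult_bound:
  fixes f g :: "'a::{finite,field} poly"
  assumes "degree f \<le> N"
  shows "skew_mult f g = (\<Sum>i\<le>N. smult (coeff f i) (monom 1 i * map_poly (frob_pow i) g))"
  unfolding skew_mult_def
  by (rule sum.mono_neutral_left) (use assms in \<open>auto simp: coeff_eq_0\<close>)

lemma skew_mult_add_left:
  fixes a b g :: "'a::{finite,field} poly"
  shows "skew_mult (a + b) g = skew_mult a g + skew_mult b g"
proof -
  let ?N = "max (degree a) (degree b)"
  have "skew_mult (a + b) g = (\<Sum>i\<le>?N. smult (coeff (a + b) i) (monom 1 i * map_poly (frob_pow i) g))"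
    by (rule skew_mult_bound) (simp add: degree_add_le)
  also have "\<dots> = (\<Sum>i\<le>?N. smult (coeff a i) (monom 1 i * map_poly (frob_pow i) g))
                  + (\<Sum>i\<le>?N. smult (coeff b i) (monom 1 i * map_poly (frob_pow i) g))"
    by (simp add: sum.distrib smult_add_left)
  also have "\<dots> = skew_mult a g + skew_mult b g"
    by (simp add: skew_mult_bound[symmetric])
  finally show ?thesis .
qed

lemma skew_mult_0_left [simp]: "skew_mult 0 (g::'a::{finite,field} poly) = 0"
  by (simp add: skew_mult_def)

lemma skew_mult_0_right [simp]: "skew_mult f (0::'a::{finite,field} poly) = 0"
  by (simp add: skew_mult_def)

lemma skew_mult_monom:
  fixes g :: "'a::{finite,field} poly"
  shows "skew_mult (monom c k) g = smult c (monom 1 k * map_poly (frob_pow k) g)"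
proof -
  have "skew_mult (monom c k) g
        = (\<Sum>i\<le>k. smult (coeff (monom c k) i) (monom 1 i * map_poly (frob_pow i) g))"
    by (rule skew_mult_bound) (simp add: degree_monom_le)
  also have "\<dots> = (\<Sum>i\<le>k. if i = k then smult c (monom 1 k * map_poly (frob_pow k) g) else 0)"
    by (rule sum.cong) (auto simp: coeff_monom)
  finally show ?thesis by simp
qed

lemma skew_mult_const:
  fixes f g :: "'a::{finite,field} poly"
  assumes "degree f = 0"
  shows "skew_mult f g = smult (coeff f 0) g"
proof -
  have "frob_pow 0 = (\<lambda>c::'a. c)" by (simp add: frob_pow_def fun_eq_iff)
  then show ?thesis using assms by (simp add: skew_mult_def)
qed

lemma degree_skew_mult_monom:
  fixes g :: "'a::{finite,field} poly"
  assumes "c \<noteq> 0" "g \<noteq> 0"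
  shows "degree (skew_mult (monom c k) g) = k + degree g"
    and "coeff (skew_mult (monom c k) g) (k + degree g) = c * frob_pow k (lead_coeff g)"
proof -
  have "map_poly (frob_pow k) g \<noteq> 0"
    using assms(2) by (simp add: map_poly_eq_0_iff frob_pow_nonzero)
  then show "degree (skew_mult (monom c k) g) = k + degree g"
    using assms by (simp add: skew_mult_monom degree_mult_eq degree_monom_eq)
  show "coeff (skew_mult (monom c k) g) (k + degree g) = c * frob_pow k (lead_coeff g)"
    by (simp add: skew_mult_monom coeff_monom_mult coeff_map_poly)
qed

lemma degree_skew_mult_le:
  fixes a b :: "'a::{finite,field} poly"
  shows "degree (skew_mult a b) \<le> degree a + degree b"
  unfolding skew_mult_def
proof (rule degree_sum_le)
  fix i assume i: "i \<in> {..degree a}"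
  have "degree (smult (coeff a i) (monom 1 i * map_poly (frob_pow i) b))
        \<le> degree (monom (1::'a) i) + degree (map_poly (frob_pow i) b)"
    using degree_smult_le degree_mult_le order_trans by blast
  also have "\<dots> \<le> degree a + degree b"
    using i by (simp add: degree_monom_eq)
  finally show "degree (smult (coeff a i) (monom 1 i * map_poly (frob_pow i) b)) \<le> degree a + degree b" .
qed simp

text \<open>F_q[t;theta] has no zero divisors and degrees add; the leading monomial of a dominates.\<close>
lemma degree_skew_mult:
  fixes a b :: "'a::{finite,field} poly"
  assumes "a \<noteq> 0" "b \<noteq> 0"
  shows "degree (skew_mult a b) = degree a + degree b"
proof -
  define m where "m = monom (lead_coeff a) (degree a)"
  define a' where "a' = a - m"
  have dm: "degree (skew_mult m b) = degree a + degree b"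
    using assms by (simp add: m_def degree_skew_mult_monom)
  have "skew_mult a b = skew_mult a' b + skew_mult m b"
    by (simp add: a'_def skew_mult_add_left[symmetric])
  moreover have "degree (skew_mult a' b) < degree a + degree b" if "a' \<noteq> 0"
  proof -
    have "degree a' \<le> degree a" unfolding a'_def m_def
      by (meson degree_diff_le degree_monom_le le_refl)
    moreover have "coeff a' (degree a) = 0" by (simp add: a'_def m_def)
    then have "degree a' \<noteq> degree a" using that by (metis leading_coeff_0_iff)
    ultimately show ?thesis using degree_skew_mult_le[of a' b] by simp
  qed
  ultimately show ?thesis
    using dm by (cases "a' = 0") (simp_all add: a'_def degree_add_eq_right)
qed

lemma skew_unit_iff: "skew_unit (a::'a::{finite,field} poly) \<longleftrightarrow> a \<noteq> 0 \<and> degree a = 0"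
proof
  assume "skew_unit a"
  then obtain g where g: "skew_mult a g = 1" using skew_unit_def by blast
  then have "a \<noteq> 0" "g \<noteq> 0" by auto
  then show "a \<noteq> 0 \<and> degree a = 0" using g degree_skew_mult[of a g] by simp
next
  assume a: "a \<noteq> 0 \<and> degree a = 0"
  then have c: "coeff a 0 \<noteq> 0" by (metis leading_coeff_0_iff)
  have a_const: "a = [:coeff a 0:]" using a by (metis degree_0_id)
  have "skew_mult a [:inverse (coeff a 0):] = 1" "skew_mult [:inverse (coeff a 0):] a = 1"
    using c a by (subst skew_mult_const; simp; subst a_const; simp)+
  then show "skew_unit a" unfolding skew_unit_def by blast
qed

lemma skew_right_division:
  fixes g :: "'a::{finite,field} poly"
  assumes "degree g \<ge> 1"
  shows "\<exists>q r. f = skew_mult q g + r \<and> degree r < degree g"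
proof (induction "degree f" arbitrary: f rule: less_induct)
  case less
  show ?case
  proof (cases "degree f < degree g")
    case True then show ?thesis by (intro exI[of _ 0] exI[of _ f]) simp
  next
    case False
    have g0: "g \<noteq> 0" using assms by auto
    have f0: "f \<noteq> 0" using False assms by auto
    define k where "k = degree f - degree g"
    define m where "m = monom (lead_coeff f / frob_pow k (lead_coeff g)) k"
    have lc_g: "frob_pow k (lead_coeff g) \<noteq> 0" using g0 by (simp add: frob_pow_nonzero)
    have deg_f: "k + degree g = degree f" using False by (simp add: k_def)
    text \<open>Subtracting m g cancels the leading term of f.\<close>
    have deg_mg: "degree (skew_mult m g) = degree f"
      and lead_mg: "coeff (skew_mult m g) (degree f) = lead_coeff f"
      using degree_skew_mult_monom[of _ g k] f0 g0 lc_g deg_f by (simp_all add: m_def)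
    define f' where "f' = f - skew_mult m g"
    have "degree f' < degree f"
    proof (cases "f' = 0")
      case True then show ?thesis using False assms by (simp add: not_less)
    next
      case False
      have "degree f' \<le> degree f" unfolding f'_def by (rule degree_diff_le) (simp_all add: deg_mg)
      moreover have "coeff f' (degree f) = 0" using lead_mg by (simp add: f'_def)
      then have "degree f' \<noteq> degree f" using False by (metis leading_coeff_0_iff)
      ultimately show ?thesis by simp
    qed
    then obtain q r where qr: "f' = skew_mult q g + r" "degree r < degree g"
      using less(1) by blast
    have "f = skew_mult (q + m) g + r"
      using qr(1) by (simp add: f'_def skew_mult_add_left algebra_simps)
    then show ?thesis using qr(2) by blast
  qed
qed

text \<open>(t^i g)^[] = x^[i] (g^[])^(p^i): the Frobenius is additive, and [i + j] = [i] + p^i [j].\<close>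
lemma fbr_shift:
  fixes g :: "'a::{finite,field} poly"
  shows "fbr (monom 1 i * map_poly (frob_pow i) g)
         = monom 1 (bracket TYPE('a) i) * fbr g ^ (CHAR('a)^i)"
proof -
  have "map_poly (frob_pow i) g = (\<Sum>j\<le>degree g. monom (frob_pow i (coeff g j)) j)"
    by (subst poly_as_sum_of_monoms[symmetric]) (simp add: coeff_map_poly)
  then have "fbr (monom 1 i * map_poly (frob_pow i) g)
             = (\<Sum>j\<le>degree g. monom (frob_pow i (coeff g j)) (bracket TYPE('a) (i + j)))"
    by (simp add: sum_distrib_left mult_monom fbr_sum fbr_monom)
  also have "\<dots> = monom 1 (bracket TYPE('a) i)
                  * (\<Sum>j\<le>degree g. monom (coeff g j) (bracket TYPE('a) j) ^ (CHAR('a)^i))"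
    by (simp add: sum_distrib_left monom_power mult_monom bracket_add frob_pow_def mult.commute)
  also have "(\<Sum>j\<le>degree g. monom (coeff g j) (bracket TYPE('a) j) ^ (CHAR('a)^i))
             = fbr g ^ (CHAR('a)^i)"
    unfolding fbr_def by (rule freshmans_dream_sum'[symmetric]) (simp_all add: prime_char)
  finally show ?thesis .
qed

lemma fbr_dvd_fbr_skew_mult:
  fixes q g :: "'a::{finite,field} poly"
  shows "fbr g dvd fbr (skew_mult q g)"
  unfolding skew_mult_def fbr_sum fbr_smult fbr_shift
proof (rule dvd_sum)
  fix i
  have "fbr g dvd fbr g ^ (CHAR('a)^i)"
    using char_ge_2[where 'a='a] by (intro dvd_power) auto
  then show "fbr g dvd smult (coeff q i) (monom 1 (bracket TYPE('a) i) * fbr g ^ CHAR('a) ^ i)"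
    by (simp add: dvd_smult)
qed

lemma fbr_dvd_iff_right_factor:
  fixes f g :: "'a::{finite,field} poly"
  assumes "degree g \<ge> 1"
  shows "fbr g dvd fbr f \<longleftrightarrow> (\<exists>q. f = skew_mult q g)"
proof
  assume dvd: "fbr g dvd fbr f"
  obtain q r where qr: "f = skew_mult q g + r" "degree r < degree g"
    using skew_right_division[OF assms] by blast
  have "fbr f = fbr (skew_mult q g) + fbr r" using qr(1) by (simp add: fbr_add)
  then have "fbr g dvd fbr r" using dvd fbr_dvd_fbr_skew_mult by (metis dvd_add_right_iff)
  moreover have "degree (fbr r) < degree (fbr g)" using qr(2) by simp
  ultimately have "r = 0" using dvd_imp_degree_le by fastforce
  then show "\<exists>q. f = skew_mult q g" using qr(1) by auto
qed (use fbr_dvd_fbr_skew_mult in blast)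

lemma skew_irreducible_iff_no_proper_factorization:
  fixes f :: "'a::{finite,field} poly"
  assumes "degree f \<ge> 1"
  shows "skew_irreducible f \<longleftrightarrow>
    \<not> (\<exists>q g. f = skew_mult q g \<and> degree q \<ge> 1 \<and> degree g \<ge> 1)"
proof -
  have "skew_unit q \<or> skew_unit g \<longleftrightarrow> \<not> (degree q \<ge> 1 \<and> degree g \<ge> 1)"
    if "f = skew_mult q g" for q g
    using that assms by (auto simp: skew_unit_iff)
  moreover have "\<not> skew_unit f" using assms by (simp add: skew_unit_iff)
  ultimately show ?thesis unfolding skew_irreducible_def by blast
qed

lemma Fq_xbr_divisor_iff_proper_factorization:
  fixes f :: "'a::{finite,field} poly"
  assumes "degree f \<ge> 1"
  shows "(\<exists>u \<in> Fq_xbr. u dvd fbr f \<and> 0 < degree u \<and> degree u < degree (fbr f))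
    \<longleftrightarrow> (\<exists>q g. f = skew_mult q g \<and> degree q \<ge> 1 \<and> degree g \<ge> 1)"
proof
  assume "\<exists>u \<in> Fq_xbr. u dvd fbr f \<and> 0 < degree u \<and> degree u < degree (fbr f)"
  then obtain g where g: "fbr g dvd fbr f" "0 < degree g" "degree g < degree f"
    using Fq_xbr_imp_fbr by (metis bracket_pos_iff bracket_less_iff degree_fbr)
  then obtain q where f: "f = skew_mult q g" using fbr_dvd_iff_right_factor[of g f] by auto
  moreover have "q \<noteq> 0" "g \<noteq> 0" using assms f by auto
  ultimately have "degree f = degree q + degree g" by (simp add: degree_skew_mult)
  then have "degree q \<ge> 1" using g(3) by linarith
  then show "\<exists>q g. f = skew_mult q g \<and> degree q \<ge> 1 \<and> degree g \<ge> 1"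
    using f g(2) by (intro exI[of _ q] exI[of _ g]) simp
next
  assume "\<exists>q g. f = skew_mult q g \<and> degree q \<ge> 1 \<and> degree g \<ge> 1"
  then obtain q g where f: "f = skew_mult q g" "degree q \<ge> 1" "degree g \<ge> 1" by blast
  then have "q \<noteq> 0" "g \<noteq> 0" by auto
  then have "degree f = degree q + degree g" using f(1) by (simp add: degree_skew_mult)
  then show "\<exists>u \<in> Fq_xbr. u dvd fbr f \<and> 0 < degree u \<and> degree u < degree (fbr f)"
    using f fbr_in_Fq_xbr fbr_dvd_fbr_skew_mult
    by (intro bexI[of _ "fbr g"]) auto
qed

theorem corollary2p6:
  fixes f :: "'a::{finite,field} poly"
  assumes "degree f \<ge> 1"
  shows "skew_irreducible f \<longleftrightarrow>
    \<not> (\<exists>u \<in> Fq_xbr. u dvd fbr f \<and> 0 < degree u \<and> degree u < degree (fbr f))"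
  using skew_irreducible_iff_no_proper_factorization[OF assms]
    Fq_xbr_divisor_iff_proper_factorization[OF assms]
  by blast

end
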